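(* Let $L$ be a sublattice of $A_n$ of rank $n$, let $v\in H_0$, and put $h=h_{\triangle,L}(v)$. Consider the simplex $S(v)=\{u\in H_0: u_j\ge v_j-h\ \forall j\}$ and its facets $F_i=\{u\in S(v): u_i=v_i-h\}$, $i=0,\dots,n$. Then $v\in\mathrm{Crit}(L)$ if and only if for each $i\in\{0,\dots,n\}$ there exists $p_i\in L$ with $p_i\in F_i$ and $p_i\notin F_j$ for all $j\neq i$. In particular, every $v\in\mathrm{Crit}(L)$ lies in the intersection $V_\triangle(p_0)\cap\dots\cap V_\triangle(p_n)$ of $n+1$ Voronoi cells of distinct points $p_0,\dots,p_n\in L$.
   Context: Let $n\ge 1$, $H_0=\{x\in\mathbb R^{n+1}:\sum_i x_i=0\}$ and $A_n=H_0\cap\mathbb Z^{n+1}$. For $p,q\in H_0$ let $d_\triangle(p,q)=\max_i(p_i-q_i)$, and for $x\in H_0$ let $h_{\triangle,L}(x)=\min_{p\in L}d_\triangle(x,p)$. $\mathrm{Crit}(L)$ denotes the set of points of $H_0$ that are local maxima of $h_{\triangle,L}$ on $H_0$. For $p\in L$, the Voronoi cell is $V_\triangle(p)=\{x\in H_0: d_\triangle(x,p)\le d_\triangle(x,p')\ \forall p'\in L\}$. *)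

theory Defs
  imports "HOL-Analysis.Analysis"
begin

text \<open>Coordinates of R^{n+1} are indexed by the finite type 'n, with CARD('n) = n+1.\<close>

definition H0 :: "(real^'n::finite) set" where
  "H0 = {x. (\<Sum>i\<in>UNIV. x $ i) = 0}"

definition A_lat :: "(real^'n::finite) set" where
  "A_lat = {x \<in> H0. \<forall>i. x $ i \<in> \<int>}"

text \<open>A sublattice of A_n: an additive subgroup of A_n. Its rank is the dimension of its span.\<close>
definition sublattice :: "(real^'n::finite) set \<Rightarrow> bool" where
  "sublattice L \<longleftrightarrow> L \<subseteq> A_lat \<and> 0 \<in> L \<and> (\<forall>x\<in>L. \<forall>y\<in>L. x + y \<in> L) \<and> (\<forall>x\<in>L. - x \<in> L)"

definition d_tri :: "real^'n::finite \<Rightarrow> real^'n \<Rightarrow> real" where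
  "d_tri p q = Max (range (\<lambda>i. p $ i - q $ i))"

definition h_tri :: "(real^'n::finite) set \<Rightarrow> real^'n \<Rightarrow> real" where
  "h_tri L x = (INF p\<in>L. d_tri x p)"

definition Crit :: "(real^'n::finite) set \<Rightarrow> (real^'n) set" where
  "Crit L = {v \<in> H0. \<exists>e>0. \<forall>x\<in>H0. dist x v < e \<longrightarrow> h_tri L x \<le> h_tri L v}"

definition Vor :: "(real^'n::finite) set \<Rightarrow> real^'n \<Rightarrow> (real^'n) set" where
  "Vor L p = {x \<in> H0. \<forall>p'\<in>L. d_tri x p \<le> d_tri x p'}"

definition simplexS :: "(real^'n::finite) set \<Rightarrow> real^'n \<Rightarrow> (real^'n) set" where
  "simplexS L v = {u \<in> H0. \<forall>j. u $ j \<ge> v $ j - h_tri L v}"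

definition facetF :: "(real^'n::finite) set \<Rightarrow> real^'n \<Rightarrow> 'n \<Rightarrow> (real^'n) set" where
  "facetF L v i = {u \<in> simplexS L v. u $ i = v $ i - h_tri L v}"

end

theory Submission
  imports Defs
begin

(* Write h = h_tri L v.  A lattice point p lies on the facet F_i of the simplex S(v) exactly
   when it is a nearest lattice point of v whose i-th coordinate realises the maximum in
   d_tri v p = max_j (v_j - p_j).  The proof rests on three general facts:
   (1) only finitely many points of an integral lattice lie in any d_tri-ball, so nearest
       lattice points exist and h_tri is a minimum;
   (2) if every facet F_i carries a lattice point p_i touching no other facet, then near v
       each p_i keeps coordinate i as its unique maximising coordinate; since every x in H0
       has some coordinate with x_i <= v_i, one gets h(x) <= d(x, p_i) <= h(v), i.e. v is a
       local maximum;
   (3) if some facet F_i carries no such point, moving v in the direction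
       w = (1,...,1, 1-(n+1), 1,...,1) (entry at i) strictly increases h: every nearest point
       has an active coordinate j <> i, where w_j = 1, and farther points stay farther by
       finiteness.  Hence v is not a local maximum.
   The Voronoi statement follows since facet points are nearest lattice points, and
   exclusiveness makes p_0, ..., p_n distinct. *)

lemma d_tri_ge: "p $ i - q $ i \<le> d_tri p q"
  unfolding d_tri_def by (rule Max_ge) auto

lemma d_tri_attained: "\<exists>i. d_tri p q = p $ i - q $ i"
proof -
  have "d_tri p q \<in> range (\<lambda>i. p $ i - q $ i)"
    unfolding d_tri_def by (rule Max_in) auto
  then show ?thesis by auto
qed

lemma d_tri_le_iff: "d_tri p q \<le> c \<longleftrightarrow> (\<forall>i. p $ i - q $ i \<le> c)"
  unfolding d_tri_def by (subst Max_le_iff) auto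

lemma d_tri_perturb:
  assumes "\<And>j. y $ j \<ge> - c"
  shows "d_tri x p - c \<le> d_tri (x + y) p"
proof -
  obtain k where "d_tri x p = x $ k - p $ k" using d_tri_attained by blast
  then have "d_tri x p - c \<le> (x + y) $ k - p $ k" using assms[of k] by simp
  also have "\<dots> \<le> d_tri (x + y) p" by (rule d_tri_ge)
  finally show ?thesis .
qed

lemma H0_add_scaled: "x \<in> H0 \<Longrightarrow> y \<in> H0 \<Longrightarrow> x + t *\<^sub>R y \<in> H0"
  by (simp add: H0_def sum.distrib sum_distrib_left[symmetric])

lemma H0_exists_coord_le:
  assumes "x \<in> H0" "y \<in> H0"
  shows "\<exists>i. x $ i \<le> y $ i"
proof (rule ccontr)
  assume "\<not> ?thesis"
  then have "0 < (\<Sum>i\<in>UNIV. x $ i - y $ i)"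
    by (intro sum_pos) (auto simp: not_le)
  also have "\<dots> = 0" using assms by (simp add: sum_subtractf H0_def)
  finally show False by simp
qed

lemma H0_coord_upper:
  fixes x :: "real^'n::finite"
  assumes "x \<in> H0" "\<And>k. x $ k \<ge> - K"
  shows "x $ j \<le> real (CARD('n) - 1) * K"
proof -
  have "0 = (\<Sum>k\<in>UNIV. x $ k)" using assms(1) by (simp add: H0_def)
  also have "\<dots> = x $ j + (\<Sum>k\<in>UNIV - {j}. x $ k)" by (rule sum.remove) auto
  finally have "x $ j = - (\<Sum>k\<in>UNIV - {j}. x $ k)" by linarith
  moreover have "(\<Sum>k\<in>UNIV - {j}. - K) \<le> (\<Sum>k\<in>UNIV - {j}. x $ k)"
    by (rule sum_mono) (use assms(2) in auto)
  ultimately show ?thesis by (simp add: card_Diff_singleton of_nat_diff)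
qed

lemma sublattice_H0: "sublattice L \<Longrightarrow> p \<in> L \<Longrightarrow> p \<in> H0"
  by (auto simp: sublattice_def A_lat_def)

lemma sublattice_Ints: "sublattice L \<Longrightarrow> p \<in> L \<Longrightarrow> p $ j \<in> \<int>"
  by (auto simp: sublattice_def A_lat_def)

section \<open>Discreteness and nearest lattice points\<close>

lemma finite_bounded_int_vectors:
  "finite {p :: real^'n. \<forall>j. p $ j \<in> \<int> \<and> \<bar>p $ j\<bar> \<le> M}"
proof (rule finite_subset)
  let ?vec = "\<lambda>f. \<chi> j. of_int (f j) :: real^'n"
  show "{p. \<forall>j. p $ j \<in> \<int> \<and> \<bar>p $ j\<bar> \<le> M} \<subseteq> ?vec ` (Pi\<^sub>E UNIV (\<lambda>_. {-\<lceil>M\<rceil>..\<lceil>M\<rceil>}))"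
  proof
    fix p :: "real^'n" assume p: "p \<in> {p. \<forall>j. p $ j \<in> \<int> \<and> \<bar>p $ j\<bar> \<le> M}"
    have floor_eq: "of_int \<lfloor>p $ j\<rfloor> = p $ j" for j
      using p by (auto elim!: Ints_cases)
    have "\<lfloor>p $ j\<rfloor> \<in> {-\<lceil>M\<rceil>..\<lceil>M\<rceil>}" for j
    proof -
      have "\<bar>p $ j\<bar> \<le> M" using p by blast
      then have "- M \<le> p $ j" "p $ j \<le> M" by (auto simp: abs_le_iff)
      then have "\<lfloor>- M\<rfloor> \<le> \<lfloor>p $ j\<rfloor>" "\<lfloor>p $ j\<rfloor> \<le> \<lfloor>M\<rfloor>" by (auto intro: floor_mono)
      then show ?thesis using floor_le_ceiling[of M] by (simp add: floor_minus) linarith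
    qed
    then have "(\<lambda>j. \<lfloor>p $ j\<rfloor>) \<in> Pi\<^sub>E UNIV (\<lambda>_. {-\<lceil>M\<rceil>..\<lceil>M\<rceil>})" by auto
    moreover have "p = ?vec (\<lambda>j. \<lfloor>p $ j\<rfloor>)" by (simp add: vec_eq_iff floor_eq)
    ultimately show "p \<in> ?vec ` (Pi\<^sub>E UNIV (\<lambda>_. {-\<lceil>M\<rceil>..\<lceil>M\<rceil>}))"
      by (intro image_eqI)
  qed
qed (intro finite_imageI finite_PiE; simp)

lemma finite_lattice_ball:
  fixes v :: "real^'n::finite"
  assumes L: "sublattice L"
  shows "finite {p\<in>L. d_tri v p \<le> C}"
proof (rule finite_subset)
  define K where "K = (\<Sum>j\<in>UNIV. \<bar>v $ j\<bar>) + \<bar>C\<bar>"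
  define M where "M = real CARD('n) * K"
  have K: "K \<ge> 0" unfolding K_def by (simp add: sum_nonneg)
  show "{p\<in>L. d_tri v p \<le> C} \<subseteq> {p :: real^'n. \<forall>j. p $ j \<in> \<int> \<and> \<bar>p $ j\<bar> \<le> M}"
  proof safe
    fix p j assume p: "p \<in> L" "d_tri v p \<le> C"
    show "p $ j \<in> \<int>" using sublattice_Ints[OF L p(1)] .
    have low: "p $ k \<ge> - K" for k
    proof -
      have "\<bar>v $ k\<bar> \<le> (\<Sum>j\<in>UNIV. \<bar>v $ j\<bar>)" by (rule member_le_sum) auto
      moreover have "v $ k - p $ k \<le> C" using p(2) d_tri_le_iff by blast
      ultimately show ?thesis unfolding K_def by linarith
    qed
    have "p $ j \<le> real (CARD('n) - 1) * K"
      using H0_coord_upper[OF sublattice_H0[OF L p(1)] low] .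
    also have "\<dots> \<le> M" unfolding M_def by (intro mult_right_mono K) simp
    moreover have "K \<le> M" unfolding M_def using K mult_right_mono[of 1 "real CARD('n)" K] by simp
    ultimately show "\<bar>p $ j\<bar> \<le> M" using low[of j] by (simp add: abs_le_iff)
  qed
qed (rule finite_bounded_int_vectors)

lemma nearest_lattice_point:
  assumes L: "sublattice L"
  shows "\<exists>q\<in>L. \<forall>p\<in>L. d_tri x q \<le> d_tri x p"
proof -
  define P where "P = {p\<in>L. d_tri x p \<le> d_tri x 0}"
  have "0 \<in> P" using L unfolding P_def sublattice_def by auto
  moreover have "finite P" unfolding P_def by (rule finite_lattice_ball[OF L])
  ultimately obtain q where "is_arg_min (d_tri x) (\<lambda>p. p \<in> P) q"
    using ex_is_arg_min_if_finite by blast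
  then have "q \<in> P" and "\<forall>p\<in>P. d_tri x q \<le> d_tri x p"
    by (auto simp: is_arg_min_linorder)
  moreover have "d_tri x q \<le> d_tri x p" if "p \<in> L" "p \<notin> P" for p
    using that \<open>0 \<in> P\<close> calculation unfolding P_def by force
  ultimately show ?thesis unfolding P_def by blast
qed

lemma h_tri_eq_nearest:
  assumes "q \<in> L" "\<forall>p\<in>L. d_tri x q \<le> d_tri x p"
  shows "h_tri L x = d_tri x q"
  unfolding h_tri_def using assms by (intro cInf_eq_minimum) auto

lemma h_tri_attained:
  assumes "sublattice L"
  shows "\<exists>q\<in>L. h_tri L x = d_tri x q"
  using nearest_lattice_point[OF assms] h_tri_eq_nearest by metis

lemma h_tri_le:
  assumes "sublattice L" "p \<in> L"
  shows "h_tri L x \<le> d_tri x p"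
  using nearest_lattice_point[OF assms(1)] h_tri_eq_nearest assms(2) by metis

lemma facetF_iff:
  assumes "p \<in> H0"
  shows "p \<in> facetF L v i \<longleftrightarrow> d_tri v p \<le> h_tri L v \<and> v $ i - p $ i = h_tri L v"
  using assms unfolding facetF_def simplexS_def d_tri_le_iff by (auto simp: algebra_simps)

lemma facet_point_in_Vor:
  assumes L: "sublattice L" and v: "v \<in> H0" and p: "p \<in> L" "p \<in> facetF L v i"
  shows "v \<in> Vor L p"
proof -
  have "d_tri v p \<le> h_tri L v" using p facetF_iff[OF sublattice_H0[OF L]] by blast
  then have "d_tri v p \<le> d_tri v p'" if "p' \<in> L" for p'
    using h_tri_le[OF L that, of v] by linarith
  then show ?thesis unfolding Vor_def using v by blast
qed

lemma exclusive_facet_gap: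
  assumes "p \<in> H0" "p \<in> facetF L v i" "p \<notin> facetF L v j"
  shows "v $ j - p $ j < v $ i - p $ i"
  using assms d_tri_ge[of v j p] unfolding facetF_iff[OF assms(1)] by force

section \<open>Exclusive facet points force a local maximum\<close>

lemma coord_gap_eventually:
  fixes v :: "real^'n::finite"
  assumes "v $ j - q $ j < v $ i - q $ i"
  shows "eventually (\<lambda>x. x $ j - q $ j < x $ i - q $ i) (nhds v)"
proof -
  have "((\<lambda>x. (x $ i - q $ i) - (x $ j - q $ j)) \<longlongrightarrow> (v $ i - q $ i) - (v $ j - q $ j)) (nhds v)"
    by (intro tendsto_diff tendsto_const tendsto_vec_nth filterlim_ident)
  from order_tendstoD(1)[OF this, of 0] assms show ?thesis by simp
qed

lemma exclusive_witnesses_imp_Crit: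
  assumes L: "sublattice L" and v: "v \<in> H0"
    and wit: "\<forall>i. \<exists>p\<in>L. p \<in> facetF L v i \<and> (\<forall>j. j \<noteq> i \<longrightarrow> p \<notin> facetF L v j)"
  shows "v \<in> Crit L"
proof -
  obtain p where pL: "\<And>i. p i \<in> L" and pF: "\<And>i. p i \<in> facetF L v i"
    and pex: "\<And>i j. j \<noteq> i \<Longrightarrow> p i \<notin> facetF L v j"
    using wit by metis
  have pH: "p i \<in> H0" for i using sublattice_H0[OF L pL] .
  have on_facet: "v $ i - p i $ i = h_tri L v" for i using pF facetF_iff[OF pH] by blast
  have "eventually (\<lambda>x. j \<noteq> i \<longrightarrow> x $ j - p i $ j < x $ i - p i $ i) (nhds v)" for i j
    by (cases "j = i") (auto intro: coord_gap_eventually exclusive_facet_gap[OF pH pF pex])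
  then have "eventually (\<lambda>x. \<forall>i j. j \<noteq> i \<longrightarrow> x $ j - p i $ j < x $ i - p i $ i) (nhds v)"
    by (simp add: eventually_all_finite)
  then obtain e where e: "e > 0"
    and gap: "\<And>x. dist x v < e \<Longrightarrow> \<forall>i j. j \<noteq> i \<longrightarrow> x $ j - p i $ j < x $ i - p i $ i"
    unfolding eventually_nhds_metric by blast
  show ?thesis unfolding Crit_def
  proof (intro CollectI conjI exI[of _ e] ballI impI v e)
    fix x assume x: "x \<in> H0" and "dist x v < e"
    obtain i where xi: "x $ i \<le> v $ i" using H0_exists_coord_le[OF x v] by blast
    have "d_tri x (p i) \<le> x $ i - p i $ i"
      unfolding d_tri_le_iff using gap[OF \<open>dist x v < e\<close>] by (metis less_imp_le order_refl)
    moreover have "h_tri L x \<le> d_tri x (p i)" by (rule h_tri_le[OF L pL])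
    ultimately show "h_tri L x \<le> h_tri L v" using xi on_facet[of i] by linarith
  qed
qed

section \<open>A facet without exclusive point allows h to increase\<close>

definition shift_dir :: "'n::finite \<Rightarrow> real^'n" where
  "shift_dir i = (\<chi> j. if j = i then 1 - real CARD('n) else 1)"

lemma shift_dir_H0: "shift_dir i \<in> H0"
proof -
  have "(\<Sum>j\<in>UNIV. shift_dir i $ j) = shift_dir i $ i + (\<Sum>j\<in>UNIV - {i}. shift_dir i $ j)"
    by (rule sum.remove) auto
  also have "(\<Sum>j\<in>UNIV - {i}. shift_dir i $ j) = (\<Sum>j\<in>UNIV - {i}. 1)"
    by (rule sum.cong) (auto simp: shift_dir_def)
  finally show ?thesis by (simp add: H0_def shift_dir_def card_Diff_singleton of_nat_diff)
qed

lemma shift_dir_lower: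
  fixes i :: "'n::finite"
  assumes "t \<ge> 0"
  shows "(t *\<^sub>R shift_dir i) $ j \<ge> - (t * real CARD('n))"
proof -
  define c where "c = t * real CARD('n)"
  have "0 \<le> c" using assms unfolding c_def by simp
  moreover have "(t *\<^sub>R shift_dir i) $ j = (if j = i then t - c else t)"
    by (simp add: shift_dir_def c_def algebra_simps)
  ultimately show ?thesis using assms unfolding c_def[symmetric] by simp
qed

lemma nearest_point_other_active_coord:
  assumes L: "sublattice L" and p: "p \<in> L" "d_tri v p = h_tri L v"
    and no_excl: "\<forall>p\<in>L. p \<in> facetF L v i \<longrightarrow> (\<exists>j. j \<noteq> i \<and> p \<in> facetF L v j)"
  shows "\<exists>j. j \<noteq> i \<and> v $ j - p $ j = h_tri L v"
proof -
  note facet = facetF_iff[OF sublattice_H0[OF L p(1)]]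
  obtain k where k: "d_tri v p = v $ k - p $ k" using d_tri_attained by blast
  show ?thesis
  proof (cases "k = i")
    case True
    then have "p \<in> facetF L v i" using facet p(2) k by simp
    then show ?thesis using no_excl p(1) facet by blast
  qed (use k p(2) in auto)
qed

lemma eventually_small_at_right:
  assumes "\<delta> > 0"
  shows "eventually (\<lambda>t. t * c < \<delta>) (at_right (0::real))"
proof -
  have "((\<lambda>t. t * c) \<longlongrightarrow> 0 * c) (at_right 0)" by (intro tendsto_intros)
  with assms show ?thesis using order_tendstoD(2) by fastforce
qed

lemma d_tri_along_shift:
  fixes v :: "real^'n::finite"
  assumes "t \<ge> 0"
  shows "d_tri v p - t * real CARD('n) \<le> d_tri (v + t *\<^sub>R shift_dir i) p"
  using d_tri_perturb shift_dir_lower[OF assms] by blast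

lemma d_tri_exceeds_along_shift:
  fixes v :: "real^'n::finite"
  assumes L: "sublattice L" and p: "p \<in> L"
    and no_excl: "\<forall>p\<in>L. p \<in> facetF L v i \<longrightarrow> (\<exists>j. j \<noteq> i \<and> p \<in> facetF L v j)"
  shows "eventually (\<lambda>t. h_tri L v < d_tri (v + t *\<^sub>R shift_dir i) p) (at_right 0)"
proof (cases "d_tri v p = h_tri L v")
  case True
  then obtain j where j: "j \<noteq> i" "v $ j - p $ j = h_tri L v"
    using nearest_point_other_active_coord[OF L p _ no_excl] by blast
  have "h_tri L v < d_tri (v + t *\<^sub>R shift_dir i) p" if "0 < t" for t
  proof -
    have "(v + t *\<^sub>R shift_dir i) $ j - p $ j = h_tri L v + t"
      using j by (simp add: shift_dir_def)
    then show ?thesis using d_tri_ge[of "v + t *\<^sub>R shift_dir i" j p] that by linarith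
  qed
  then show ?thesis using eventually_at_right_less[of "0::real"] by (auto elim: eventually_mono)
next
  case False
  then have "0 < d_tri v p - h_tri L v" using h_tri_le[OF L p, of v] by linarith
  from eventually_conj[OF eventually_small_at_right[OF this, of "real CARD('n)"]
                        eventually_at_right_less]
  show ?thesis
  proof eventually_elim
    case (elim t)
    then show ?case using d_tri_along_shift[of t v p i] by linarith
  qed
qed

text \<open>The same holds for h itself: only finitely many lattice points are near enough to
  matter, and the remaining ones stay farther than h(v) for small t.\<close>
lemma h_tri_increases_along_shift:
  fixes v :: "real^'n::finite"
  assumes L: "sublattice L"
    and no_excl: "\<forall>p\<in>L. p \<in> facetF L v i \<longrightarrow> (\<exists>j. j \<noteq> i \<and> p \<in> facetF L v j)"
  shows "eventually (\<lambda>t. h_tri L v < h_tri L (v + t *\<^sub>R shift_dir i)) (at_right 0)"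
proof -
  define x where "x t = v + t *\<^sub>R shift_dir i" for t
  define P where "P = {p\<in>L. d_tri v p \<le> h_tri L v + 1}"
  have "finite P" unfolding P_def by (rule finite_lattice_ball[OF L])
  then have "eventually (\<lambda>t. (\<forall>p\<in>P. h_tri L v < d_tri (x t) p)
                           \<and> t * real CARD('n) < 1 \<and> 0 < t) (at_right 0)"
    unfolding x_def
    by (intro eventually_conj eventually_ball_finite eventually_small_at_right
              eventually_at_right_less ballI d_tri_exceeds_along_shift[OF L _ no_excl])
       (auto simp: P_def)
  then show ?thesis unfolding x_def[symmetric]
  proof eventually_elim
    case (elim t)
    obtain q where q: "q \<in> L" "h_tri L (x t) = d_tri (x t) q" using h_tri_attained[OF L] by blast
    show "h_tri L v < h_tri L (x t)"
    proof (cases "q \<in> P")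
      case False
      then show ?thesis using q elim d_tri_along_shift[of t v q i] unfolding P_def x_def by auto
    qed (use q elim in auto)
  qed
qed

lemma Crit_imp_exclusive_witnesses:
  assumes L: "sublattice L" and crit: "v \<in> Crit L"
  shows "\<forall>i. \<exists>p\<in>L. p \<in> facetF L v i \<and> (\<forall>j. j \<noteq> i \<longrightarrow> p \<notin> facetF L v j)"
proof (rule ccontr)
  assume "\<not> ?thesis"
  then obtain i where no_excl: "\<forall>p\<in>L. p \<in> facetF L v i \<longrightarrow> (\<exists>j. j \<noteq> i \<and> p \<in> facetF L v j)"
    by blast
  obtain e where v: "v \<in> H0" and e: "e > 0"
    and local_max: "\<And>x. x \<in> H0 \<Longrightarrow> dist x v < e \<Longrightarrow> h_tri L x \<le> h_tri L v"
    using crit unfolding Crit_def by blast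
  have "((\<lambda>t. v + t *\<^sub>R shift_dir i) \<longlongrightarrow> v + 0 *\<^sub>R shift_dir i) (at_right 0)"
    by (intro tendsto_intros)
  then have "eventually (\<lambda>t. dist (v + t *\<^sub>R shift_dir i) v < e) (at_right 0)"
    using e by (simp add: tendsto_iff)
  from eventually_happens'[OF _ eventually_conj[OF this h_tri_increases_along_shift[OF L no_excl]]]
  obtain t where "dist (v + t *\<^sub>R shift_dir i) v < e" "h_tri L v < h_tri L (v + t *\<^sub>R shift_dir i)"
    by auto
  with local_max[OF H0_add_scaled[OF v shift_dir_H0]] show False by fastforce
qed

theorem mainTheorem13:
  fixes L :: "(real^'n::finite) set" and v :: "real^'n"
  assumes "CARD('n) \<ge> 2"
    and "sublattice L"
    and "dim L = CARD('n) - 1"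
    and "v \<in> H0"
  shows "(v \<in> Crit L \<longleftrightarrow>
           (\<forall>i. \<exists>p\<in>L. p \<in> facetF L v i \<and> (\<forall>j. j \<noteq> i \<longrightarrow> p \<notin> facetF L v j)))
       \<and> (v \<in> Crit L \<longrightarrow>
           (\<exists>p :: 'n \<Rightarrow> real^'n. inj p \<and> (\<forall>i. p i \<in> L) \<and> (\<forall>i. v \<in> Vor L (p i))))"
proof -
  note L = assms(2) and v = assms(4)
  have voronoi: "\<exists>p :: 'n \<Rightarrow> real^'n. inj p \<and> (\<forall>i. p i \<in> L) \<and> (\<forall>i. v \<in> Vor L (p i))"
    if crit: "v \<in> Crit L"
  proof -
    obtain p where pL: "\<And>i. p i \<in> L" and pF: "\<And>i. p i \<in> facetF L v i"
      and pex: "\<And>i j. j \<noteq> i \<Longrightarrow> p i \<notin> facetF L v j"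
      using Crit_imp_exclusive_witnesses[OF L crit] by metis
    have "inj p" by (rule injI) (metis pF pex)
    with pL facet_point_in_Vor[OF L v pL pF] show ?thesis by blast
  qed
  show ?thesis
    using exclusive_witnesses_imp_Crit[OF L v] Crit_imp_exclusive_witnesses[OF L] voronoi by blast
qed

end
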